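(* Let $f\colon\mathbb{R}^n\to\mathbb{R}$ be continuous and suppose there is $\gamma>0$ such that (i) the set $S_\gamma=\{z\in\mathbb{R}^n : f(z)\le\inf f+\gamma\}$ is compact, and (ii) every $x\in S_\gamma$ with $0\in\partial f(x)$ is a global minimizer of $f$. Let $t\in(0,\infty)$ and let $x\in\mathbb{R}^n$ be a local minimizer of $u(\cdot,t)$. If $t\ge\|x-x^\star\|^2/(2\gamma)$ for some global minimizer $x^\star$ of $f$, then $x$ is a global minimizer of $f$.
   Context: $u(x,t)=\inf_{z\in\mathbb{R}^n}\big(f(z)+\frac{1}{2t}\|z-x\|^2\big)$. The subdifferential $\partial f(\bar x)$ is the set of all $v\in\mathbb{R}^n$ such that $f(x)\ge f(\bar x)+\langle v,x-\bar x\rangle+o(\|x-\bar x\|)$ as $x\to\bar x$. *)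

theory Defs
  imports "HOL-Analysis.Analysis" "HOL-Library.Landau_Symbols"
begin

definition moreau_u :: "('a::euclidean_space \<Rightarrow> real) \<Rightarrow> 'a \<Rightarrow> real \<Rightarrow> real" where
  "moreau_u f x t = (INF z. f z + (norm (z - x))^2 / (2 * t))"

definition subdiff :: "('a::euclidean_space \<Rightarrow> real) \<Rightarrow> 'a \<Rightarrow> 'a set" where
  "subdiff f xb = {v. \<exists>g. g \<in> o[at xb](\<lambda>y. norm (y - xb)) \<and>
      (\<forall>\<^sub>F y in at xb. f y \<ge> f xb + v \<bullet> (y - xb) + g y)}"

definition global_minimizer :: "('a \<Rightarrow> real) \<Rightarrow> 'a \<Rightarrow> bool" where
  "global_minimizer f x \<longleftrightarrow> (\<forall>z. f x \<le> f z)"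

definition local_minimizer :: "('a::metric_space \<Rightarrow> real) \<Rightarrow> 'a \<Rightarrow> bool" where
  "local_minimizer g x \<longleftrightarrow> (\<exists>e>0. \<forall>y. dist y x < e \<longrightarrow> g x \<le> g y)"

end

theory Submission
  imports Defs
begin

(* At a local minimizer x of u(., t), x is its own proximal point: the infimum defining u(x, t)
   is attained at some z, since the objective is continuous and coercive, and if z were different
   from x, moving x slightly towards z would strictly decrease u. Hence
   f x <= f w + |w - x|^2 / (2t) for all w. The quadratic term is o(|w - x|), so 0 is a
   subgradient at x, and w = xstar together with t >= |x - xstar|^2 / (2 gamma) puts x into the
   sublevel set S_gamma, where hypothesis (ii) applies. *)

lemma moreau_u_le:
  assumes "bdd_below (range f)" and "t \<ge> 0"
  shows "moreau_u f x t \<le> f z + (norm (z - x))^2 / (2 * t)"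
proof -
  obtain m where "\<And>w. m \<le> f w" using assms(1) by (auto simp: bdd_below_def)
  then have "\<And>w. m \<le> f w + (norm (w - x))^2 / (2 * t)"
    using assms(2) by (smt (verit) divide_nonneg_nonneg zero_le_power2)
  then have "bdd_below (range (\<lambda>w. f w + (norm (w - x))^2 / (2 * t)))"
    by (meson bdd_belowI2)
  then show ?thesis unfolding moreau_u_def by (rule cINF_lower) simp
qed

lemma moreau_u_eq_attained:
  assumes "\<And>w. f z + (norm (z - x))^2 / (2 * t) \<le> f w + (norm (w - x))^2 / (2 * t)"
  shows "moreau_u f x t = f z + (norm (z - x))^2 / (2 * t)"
  unfolding moreau_u_def by (rule cInf_eq_minimum) (use assms in auto)

lemma moreau_u_attained:
  fixes f :: "'a::euclidean_space \<Rightarrow> real"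
  assumes "continuous_on UNIV f" and "bdd_below (range f)" and "t > 0"
  obtains z where "\<And>w. f z + (norm (z - x))^2 / (2 * t) \<le> f w + (norm (w - x))^2 / (2 * t)"
proof -
  define h where "h = (\<lambda>w. f w + (norm (w - x))^2 / (2 * t))"
  obtain m where m: "\<And>w. m \<le> f w" using assms(2) by (auto simp: bdd_below_def)
  define K where "K = {w. h w \<le> h x}"
  have h_cont: "continuous_on UNIV h"
    unfolding h_def using assms(3) by (intro continuous_intros assms(1)) simp
  have "K \<subseteq> cball x (sqrt (2 * t * (h x - m)))"
  proof
    fix w assume "w \<in> K"
    then have "(norm (w - x))^2 / (2 * t) \<le> h x - m"
      using m[of w] unfolding K_def h_def by simp
    then have "(norm (w - x))^2 \<le> 2 * t * (h x - m)"
      using assms(3) by (simp add: divide_le_eq mult.commute)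
    then show "w \<in> cball x (sqrt (2 * t * (h x - m)))"
      by (simp add: dist_norm norm_minus_commute real_le_rsqrt)
  qed
  moreover have "closed K"
    unfolding K_def using h_cont by (simp add: closed_Collect_le continuous_on_const)
  ultimately have "compact K"
    using bounded_cball bounded_subset compact_eq_bounded_closed by blast
  moreover have "x \<in> K" unfolding K_def by simp
  ultimately obtain z where "z \<in> K" and z_min: "\<And>w. w \<in> K \<Longrightarrow> h z \<le> h w"
    using continuous_attains_inf[of K h] continuous_on_subset[OF h_cont] by blast
  have "h z \<le> h w" for w
    using \<open>z \<in> K\<close> z_min[of w] by (cases "w \<in> K") (auto simp: K_def)
  then show thesis using that unfolding h_def by blast
qed

lemma local_minimizer_moreau_u_prox_eq:
  assumes "local_minimizer (\<lambda>y. moreau_u f y t) x" and "bdd_below (range f)" and "t > 0"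
    and z_min: "\<And>w. f z + (norm (z - x))^2 / (2 * t) \<le> f w + (norm (w - x))^2 / (2 * t)"
  shows "z = x"
proof (rule ccontr)
  assume "z \<noteq> x"
  define n where "n = norm (z - x)"
  have "n > 0" using \<open>z \<noteq> x\<close> n_def by simp
  obtain e where "e > 0" and e_min: "\<And>y. dist y x < e \<Longrightarrow> moreau_u f x t \<le> moreau_u f y t"
    using assms(1) unfolding local_minimizer_def by blast
  define s where "s = min (1/2) (e / (2 * n))"
  have s: "0 < s" "s < 1" "s * n < e"
    using \<open>e > 0\<close> \<open>n > 0\<close> unfolding s_def by (auto simp: min_def field_simps)
  define y where "y = x + s *\<^sub>R (z - x)"
  have "z - y = (1 - s) *\<^sub>R (z - x)" unfolding y_def by (simp add: algebra_simps)
  then have dist_zy: "norm (z - y) = (1 - s) * n" using s unfolding n_def by simp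
  have "dist y x < e" unfolding y_def n_def dist_norm using s n_def by simp
  then have "moreau_u f x t \<le> moreau_u f y t" by (rule e_min)
  also have "\<dots> \<le> f z + ((1 - s) * n)^2 / (2 * t)"
    using moreau_u_le[OF assms(2), of t y z] assms(3) dist_zy by simp
  also have "\<dots> < f z + n^2 / (2 * t)"
    using s \<open>n > 0\<close> assms(3) by (intro add_strict_left_mono divide_strict_right_mono power_strict_mono) auto
  also have "\<dots> = moreau_u f x t"
    unfolding n_def by (rule moreau_u_eq_attained[OF z_min, symmetric])
  finally show False by simp
qed

lemma local_minimizer_moreau_u_prox_ineq:
  fixes f :: "'a::euclidean_space \<Rightarrow> real"
  assumes "continuous_on UNIV f" and "bdd_below (range f)" and "t > 0"
    and "local_minimizer (\<lambda>y. moreau_u f y t) x"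
  shows "f x \<le> f w + (norm (w - x))^2 / (2 * t)"
proof -
  obtain z where z_min: "\<And>w. f z + (norm (z - x))^2 / (2 * t) \<le> f w + (norm (w - x))^2 / (2 * t)"
    using moreau_u_attained[OF assms(1-3)] by blast
  have "z = x" using local_minimizer_moreau_u_prox_eq[OF assms(4,2,3) z_min] .
  then show ?thesis using z_min[of w] by simp
qed

lemma norm_power2_smallo: "(\<lambda>y. c * (norm (y - x))^2) \<in> o[at x](\<lambda>y. norm (y - x))"
proof (rule smalloI_tendsto)
  have "((\<lambda>y. c * norm (y - x)) \<longlongrightarrow> c * norm (x - x)) (at x)"
    by (intro tendsto_intros)
  moreover have "\<forall>\<^sub>F y in at x. c * norm (y - x) = c * (norm (y - x))^2 / norm (y - x)"
    by (auto simp: eventually_at_filter power2_eq_square)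
  ultimately show "((\<lambda>y. c * (norm (y - x))^2 / norm (y - x)) \<longlongrightarrow> 0) (at x)"
    by (simp add: tendsto_cong)
  show "\<forall>\<^sub>F y in at x. norm (y - x) \<noteq> 0"
    by (auto simp: eventually_at_filter)
qed

lemma zero_in_subdiff_if_quadratic_minorant:
  assumes "\<forall>\<^sub>F w in at x. f x \<le> f w + c * (norm (w - x))^2"
  shows "0 \<in> subdiff f x"
  unfolding subdiff_def
proof (intro CollectI exI conjI)
  show "(\<lambda>y. - c * (norm (y - x))^2) \<in> o[at x](\<lambda>y. norm (y - x))"
    by (rule norm_power2_smallo)
  show "\<forall>\<^sub>F y in at x. f x + 0 \<bullet> (y - x) + - c * (norm (y - x))^2 \<le> f y"
    using assms by eventually_elim simp
qed

theorem lemma6: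
  fixes f :: "'a::euclidean_space \<Rightarrow> real" and \<gamma> t :: real and x xstar :: 'a
  assumes "continuous_on UNIV f"
    and "\<gamma> > 0"
    and "compact {z. f z \<le> (INF w. f w) + \<gamma>}"
    and "\<forall>y\<in>{z. f z \<le> (INF w. f w) + \<gamma>}. 0 \<in> subdiff f y \<longrightarrow> global_minimizer f y"
    and "t > 0"
    and "local_minimizer (\<lambda>y. moreau_u f y t) x"
    and "global_minimizer f xstar"
    and "t \<ge> (norm (x - xstar))^2 / (2 * \<gamma>)"
  shows "global_minimizer f x"
proof -
  have f_ge: "\<And>w. f xstar \<le> f w" using assms(7) unfolding global_minimizer_def by blast
  then have "bdd_below (range f)" by (meson bdd_belowI2)
  note prox = local_minimizer_moreau_u_prox_ineq[OF assms(1) this assms(5,6)]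
  have "0 \<in> subdiff f x"
    using prox by (intro zero_in_subdiff_if_quadratic_minorant[where c = "1 / (2 * t)"]) simp
  moreover have "f x \<le> (INF w. f w) + \<gamma>"
  proof -
    have "(norm (xstar - x))^2 / (2 * t) \<le> \<gamma>"
      using assms(2,5,8) by (simp add: norm_minus_commute divide_le_eq mult_ac)
    moreover have "f xstar \<le> (INF w. f w)" by (rule cINF_greatest) (auto simp: f_ge)
    ultimately show ?thesis using prox[of xstar] by simp
  qed
  ultimately show ?thesis using assms(4) by blast
qed

end
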